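(* Let $a_{21}^0(u)=45u+608u^3-512u^5+16u(28u^2-3)\cos4u+3u\cos8u+12\sin4u-432u^2\sin4u+256u^4\sin4u-6\sin8u$. Then $a_{21}^0(u)<0$ for all $u>0$. *)

theory Defs
  imports Complex_Main
begin

end

theory Submission
  imports Defs "HOL-Decision_Procs.Polynomial_List"
begin

text \<open>
  With x = 4u the function is a21_rescaled x / 4. For x \<ge> 6 the quintic term wins: by
  Cauchy-Schwarz, (28x^3 - 48x) cos x + (4x^4 - 108x^2 + 48) sin x stays below
  2x^5 - 38x^3 - 48x - 24. On (0, 6] we replace cos x, cos 2x, sin x, sin 2x by their Taylor
  polynomials of degree 43 and bound the Lagrange remainders; the resulting polynomial majorant
  is coefficientwise below x^15 Q(x) for an explicit Q with short dyadic coefficients. Finally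
  Q < 0 on [0, 6] is certified on seven subintervals [a, b]: writing Q = P - N with P and N
  the positive and negative parts of the coefficients, both P and N increase on [0, \<infinity>),
  so Q(x) \<le> P(b) - N(a) for x in [a, b].
\<close>

lemma poly_replicate_zero_append: "poly (replicate n 0 @ p) x = x ^ n * poly p (x :: real)"
  by (induction n) auto

lemma poly_map_upt: "poly (map c [0..<n]) x = (\<Sum>m<n. c m * x ^ m :: real)"
proof (induction n arbitrary: c)
  case 0
  then show ?case by simp
next
  case (Suc n)
  have "poly (map c [0..<Suc n]) x = c 0 + x * poly (map (\<lambda>m. c (Suc m)) [0..<n]) x"
    by (simp add: upt_conv_Cons map_Suc_upt[symmetric] comp_def del: upt_Suc)
  also have "\<dots> = (\<Sum>m<Suc n. c m * x ^ m)"
    by (simp add: Suc.IH sum.lessThan_Suc_shift sum_distrib_left mult.left_commute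
        del: sum.lessThan_Suc)
  finally show ?case .
qed

lemma poly_le_poly_coeffwise:
  fixes x :: real
  assumes "list_all2 (\<le>) p q" "0 \<le> x"
  shows "poly p x \<le> poly q x"
  using assms(1)
proof (induction p q rule: list_all2_induct)
  case (Cons a p b q)
  then show ?case using assms(2) by (simp add: add_mono mult_left_mono)
qed simp

lemma poly_nonneg:
  fixes x :: real
  assumes "\<forall>c \<in> set p. 0 \<le> c" "0 \<le> x"
  shows "0 \<le> poly p x"
  using assms(1) by (induction p) (simp_all add: assms(2))

lemma poly_mono_nonneg:
  fixes x y :: real
  assumes "\<forall>c \<in> set p. 0 \<le> c" "0 \<le> x" "x \<le> y"
  shows "poly p x \<le> poly p y"
  using assms(1)
proof (induction p)
  case (Cons c p)
  then have "x * poly p x \<le> y * poly p y"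
    using assms(2,3) poly_nonneg[of p x] by (intro mult_mono) auto
  then show ?case by simp
qed simp

definition pos_coeffs :: "real list \<Rightarrow> real list" where
  "pos_coeffs p = map (\<lambda>c. max c 0) p"

definition neg_coeffs :: "real list \<Rightarrow> real list" where
  "neg_coeffs p = map (\<lambda>c. max (- c) 0) p"

lemma poly_pos_coeffs_minus_neg_coeffs:
  "poly (pos_coeffs p) x - poly (neg_coeffs p) x = poly p x"
  by (induction p) (auto simp: pos_coeffs_def neg_coeffs_def max_def algebra_simps)

lemma poly_le_on_interval:
  fixes a b x :: real
  assumes "0 \<le> a" "a \<le> x" "x \<le> b"
  shows "poly p x \<le> poly (pos_coeffs p) b - poly (neg_coeffs p) a"
proof -
  have "poly (pos_coeffs p) x \<le> poly (pos_coeffs p) b"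
    using assms by (intro poly_mono_nonneg) (auto simp: pos_coeffs_def)
  moreover have "poly (neg_coeffs p) a \<le> poly (neg_coeffs p) x"
    using assms by (intro poly_mono_nonneg) (auto simp: neg_coeffs_def)
  ultimately show ?thesis
    using poly_pos_coeffs_minus_neg_coeffs[of p x] by linarith
qed

fun neg_on_partition :: "real list \<Rightarrow> real list \<Rightarrow> bool" where
  "neg_on_partition p (a # b # bs) \<longleftrightarrow>
     a \<le> b \<and> poly (pos_coeffs p) b < poly (neg_coeffs p) a \<and> neg_on_partition p (b # bs)"
| "neg_on_partition p _ \<longleftrightarrow> True"

lemma neg_on_partition_imp_poly_neg:
  fixes x :: real
  assumes "neg_on_partition p (a # bs)" "bs \<noteq> []" "0 \<le> a" "a \<le> x" "x \<le> last (a # bs)"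
  shows "poly p x < 0"
  using assms
proof (induction bs arbitrary: a)
  case (Cons b bs)
  show ?case
  proof (cases "x \<le> b")
    case True
    then show ?thesis
      using Cons.prems poly_le_on_interval[of a x b p] by auto
  next
    case False
    then show ?thesis
      using Cons.prems Cons.IH[of b] by (cases bs) auto
  qed
qed simp

lemma Maclaurin_cos_bound:
  "\<bar>cos x - (\<Sum>m<n. cos_coeff m * x ^ m)\<bar> \<le> inverse (fact n) * \<bar>x\<bar> ^ n"
proof -
  define S where "S = (\<Sum>m<n. cos_coeff m * x ^ m)"
  obtain t where "cos x = S + cos t / fact n * x ^ n"
    using Maclaurin_cos_expansion[of x n] unfolding S_def by blast
  then have "\<bar>cos x - S\<bar> = \<bar>cos t\<bar> / fact n * \<bar>x\<bar> ^ n"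
    by (simp add: abs_mult power_abs)
  also have "\<dots> \<le> 1 / fact n * \<bar>x\<bar> ^ n"
    by (intro mult_right_mono divide_right_mono) auto
  finally show ?thesis
    by (simp add: S_def divide_inverse)
qed

definition sin_taylor :: "real \<Rightarrow> nat \<Rightarrow> real list" where
  "sin_taylor c n = map (\<lambda>m. sin_coeff m * c ^ m) [0..<n]"

definition cos_taylor :: "real \<Rightarrow> nat \<Rightarrow> real list" where
  "cos_taylor c n = map (\<lambda>m. cos_coeff m * c ^ m) [0..<n]"

lemma sin_taylor_error: "\<bar>sin (c * x) - poly (sin_taylor c n) x\<bar> \<le> \<bar>c * x\<bar> ^ n / fact n"
proof -
  have "poly (sin_taylor c n) x = (\<Sum>m<n. sin_coeff m * (c * x) ^ m)"
    by (simp add: sin_taylor_def poly_map_upt power_mult_distrib mult.assoc)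
  then show ?thesis
    using Maclaurin_sin_bound[of "c * x" n] by (simp add: divide_inverse mult.commute)
qed

lemma cos_taylor_error: "\<bar>cos (c * x) - poly (cos_taylor c n) x\<bar> \<le> \<bar>c * x\<bar> ^ n / fact n"
proof -
  have "poly (cos_taylor c n) x = (\<Sum>m<n. cos_coeff m * (c * x) ^ m)"
    by (simp add: cos_taylor_def poly_map_upt power_mult_distrib mult.assoc)
  then show ?thesis
    using Maclaurin_cos_bound[of "c * x" n] by (simp add: divide_inverse mult.commute)
qed

lemma poly_mult_approx_le:
  fixes x s t e :: real
  assumes "\<bar>t - s\<bar> \<le> e" "0 \<le> x"
  shows "poly p x * t \<le> poly p x * s + poly (map abs p) x * e"
proof -
  have "poly p x * (t - s) \<le> \<bar>poly p x\<bar> * \<bar>t - s\<bar>"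
    by (simp only: abs_mult[symmetric] abs_ge_self)
  also have "\<dots> \<le> poly (map abs p) x * e"
  proof (rule mult_mono)
    show "\<bar>poly p x\<bar> \<le> poly (map abs p) x"
      using assms(2) by (intro poly_mono) simp
    show "0 \<le> poly (map abs p) x"
      using assms(2) by (intro poly_nonneg) auto
  qed (use assms in auto)
  finally show ?thesis by (simp add: algebra_simps)
qed

definition trig_majorant ::
    "real list \<Rightarrow> real list \<Rightarrow> real list \<Rightarrow> real list \<Rightarrow> real list \<Rightarrow> nat \<Rightarrow> real list" where
  "trig_majorant p0 p1 p2 p3 p4 n =
     p0 +++ p1 *** cos_taylor 1 n +++ p2 *** cos_taylor 2 n
     +++ p3 *** sin_taylor 1 n +++ p4 *** sin_taylor 2 n
     +++ (replicate n 0 @ inverse (fact n) %*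
            (map abs p1 +++ map abs p3 +++ 2 ^ n %* (map abs p2 +++ map abs p4)))"

lemma trig_le_trig_majorant:
  assumes "0 \<le> x"
  shows "poly p0 x + poly p1 x * cos x + poly p2 x * cos (2 * x) + poly p3 x * sin x
           + poly p4 x * sin (2 * x) \<le> poly (trig_majorant p0 p1 p2 p3 p4 n) x"
proof -
  define e where "e = x ^ n / fact n"
  have "\<bar>cos x - poly (cos_taylor 1 n) x\<bar> \<le> e"
    using cos_taylor_error[of 1 x n] assms by (simp add: e_def power_mult_distrib)
  then have "poly p1 x * cos x \<le> poly p1 x * poly (cos_taylor 1 n) x + poly (map abs p1) x * e"
    using assms by (rule poly_mult_approx_le)
  moreover have "\<bar>cos (2 * x) - poly (cos_taylor 2 n) x\<bar> \<le> 2 ^ n * e"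
    using cos_taylor_error[of 2 x n] assms by (simp add: e_def power_mult_distrib)
  then have "poly p2 x * cos (2 * x)
      \<le> poly p2 x * poly (cos_taylor 2 n) x + poly (map abs p2) x * (2 ^ n * e)"
    using assms by (rule poly_mult_approx_le)
  moreover have "\<bar>sin x - poly (sin_taylor 1 n) x\<bar> \<le> e"
    using sin_taylor_error[of 1 x n] assms by (simp add: e_def power_mult_distrib)
  then have "poly p3 x * sin x \<le> poly p3 x * poly (sin_taylor 1 n) x + poly (map abs p3) x * e"
    using assms by (rule poly_mult_approx_le)
  moreover have "\<bar>sin (2 * x) - poly (sin_taylor 2 n) x\<bar> \<le> 2 ^ n * e"
    using sin_taylor_error[of 2 x n] assms by (simp add: e_def power_mult_distrib)
  then have "poly p4 x * sin (2 * x)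
      \<le> poly p4 x * poly (sin_taylor 2 n) x + poly (map abs p4) x * (2 ^ n * e)"
    using assms by (rule poly_mult_approx_le)
  moreover have "poly (trig_majorant p0 p1 p2 p3 p4 n) x = poly p0 x
      + poly p1 x * poly (cos_taylor 1 n) x + poly p2 x * poly (cos_taylor 2 n) x
      + poly p3 x * poly (sin_taylor 1 n) x + poly p4 x * poly (sin_taylor 2 n) x
      + poly (map abs p1) x * e + poly (map abs p2) x * (2 ^ n * e)
      + poly (map abs p3) x * e + poly (map abs p4) x * (2 ^ n * e)"
    by (simp add: trig_majorant_def poly_add poly_mult poly_cmult poly_replicate_zero_append
        e_def divide_inverse algebra_simps)
  ultimately show ?thesis by linarith
qed

definition a21_rescaled :: "real \<Rightarrow> real" where
  "a21_rescaled x = 45*x + 38*x^3 - 2*x^5 + (28*x^3 - 48*x) * cos x + 3*x * cos (2*x)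
     + (48 - 108*x^2 + 4*x^4) * sin x - 24 * sin (2*x)"

definition a21_taylor_majorant :: "nat \<Rightarrow> real list" where
  "a21_taylor_majorant =
     trig_majorant [0, 45, 0, 38, 0, -2] [0, -48, 0, 28] [0, 3] [48, 0, -108, 0, 4] [-24]"

lemma a21_rescaled_le_majorant:
  assumes "0 \<le> x"
  shows "a21_rescaled x \<le> poly (a21_taylor_majorant n) x"
proof -
  have eq: "a21_rescaled x = poly [0, 45, 0, 38, 0, -2] x
      + poly [0, -48, 0, 28] x * cos x + poly [0, 3] x * cos (2 * x)
      + poly [48, 0, -108, 0, 4] x * sin x + poly [-24] x * sin (2 * x)"
    by (simp add: a21_rescaled_def algebra_simps power_numeral_reduce)
  show ?thesis
    unfolding eq a21_taylor_majorant_def by (rule trig_le_trig_majorant[OF assms])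
qed

lemma lincomb_cos_sin_less:
  fixes b d k x :: real
  assumes "b\<^sup>2 + d\<^sup>2 < k\<^sup>2" "0 \<le> k"
  shows "b * cos x + d * sin x < k"
proof -
  have "(b * cos x + d * sin x)\<^sup>2 + (b * sin x - d * cos x)\<^sup>2
      = (b\<^sup>2 + d\<^sup>2) * ((sin x)\<^sup>2 + (cos x)\<^sup>2)"
    by algebra
  also have "\<dots> = b\<^sup>2 + d\<^sup>2"
    by simp
  finally have "(b * cos x + d * sin x)\<^sup>2 \<le> b\<^sup>2 + d\<^sup>2"
    using zero_le_power2[of "b * sin x - d * cos x"] by linarith
  then have "(b * cos x + d * sin x)\<^sup>2 < k\<^sup>2"
    using assms(1) by linarith
  then show ?thesis
    using assms(2) by (rule power_less_imp_less_base)
qed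

lemma a21_rescaled_neg_large:
  assumes "6 \<le> x"
  shows "a21_rescaled x < 0"
proof -
  define K where "K = 2*x^5 - 38*x^3 - 48*x - 24"
  define y where "y = x - 6"
  have y: "x = y + 6" "0 \<le> y"
    using assms by (auto simp: y_def)
  have K_y: "K = 7032 + 8808*y + 3636*y^2 + 682*y^3 + 60*y^4 + 2*y^5"
    unfolding K_def y(1) by (simp add: power_numeral_reduce algebra_simps)
  have gap_y: "K\<^sup>2 - (28*x^3 - 48*x)\<^sup>2 - (48 - 108*x^2 + 4*x^4)\<^sup>2
      = 14465088 + 83786112*y + 107357184*y^2 + 66797088*y^3 + 24660768*y^4
        + 5853936*y^5 + 920628*y^6 + 95616*y^7 + 6312*y^8 + 240*y^9 + 4*y^10"
    unfolding K_def y(1) by (simp add: power_numeral_reduce power2_eq_square algebra_simps)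
  have "0 \<le> y^2" "0 \<le> y^3" "0 \<le> y^4" "0 \<le> y^5" "0 \<le> y^6" "0 \<le> y^7" "0 \<le> y^8"
      "0 \<le> y^9" "0 \<le> y^10"
    using y(2) by simp_all
  then have "0 < K" and "(28*x^3 - 48*x)\<^sup>2 + (48 - 108*x^2 + 4*x^4)\<^sup>2 < K\<^sup>2"
    using K_y gap_y y(2) by linarith+
  then have "(28*x^3 - 48*x) * cos x + (48 - 108*x^2 + 4*x^4) * sin x < K"
    by (intro lincomb_cos_sin_less) simp_all
  moreover have "3*x * cos (2*x) \<le> 3*x"
    using assms by (simp add: mult_left_le)
  moreover have "- 24 * sin (2*x) \<le> 24"
    using sin_ge_minus_one[of "2*x"] by linarith
  ultimately show ?thesis
    unfolding a21_rescaled_def K_def by linarith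
qed

text \<open>
  An upward rounding of the coefficients of x^15, ..., x^48 of a21_taylor_majorant 44, whose
  lower coefficients vanish because a21_rescaled x = - x^15 / 47628000 + O(x^17).
\<close>
definition a21_majorant_coeffs :: "real list" where "a21_majorant_coeffs =
    [(-24787763935445 / 1180591620717411303424), 0, 18027464680325 / 18889465931478580854784,
     0, (-25885590310209 / 1208925819614629174706176), 0,
     12209076608897 / 38685626227668133590597632, 0,
     (-33974480231947 / 9903520314283042199192993792), 0,
     18546483178753 / 633825300114114700748351602688, 0,
     (-33019398448699 / 162259276829213363391578010288128), 0,
     12297812665569 / 10384593717069655257060992658440192, 0,
     (-31244338752601 / 5316911983139663491615228241121378304), 0,
     34336022195357 / 1361129467683753853853498429727072845824, 0,
     (-33021991357785 / 348449143727040986586495598010130648530944), 0,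
     28058432576509 / 89202980794122492566142873090593446023921664, 0,
     (-21233585275405 / 22835963083295358096932575511191922182123945984), 0,
     450341040605 / 182687704666362864775460604089535377456991567872, 0,
     (-17649298023559 / 2993155353253689176481146537402947624255349848014848),
     30425725034471 / 191561942608236107294793378393788647952342390272950272,
     15212862594969 / 766247770432944429179173513575154591809369561091801088,
     34228940663775 / 842498333348457493583344221469363458551160763204392890034487820288,
     (-23453163047401 / 421249166674228746791672110734681729275580381602196445017243910144),
     20283816689645 / 13479973333575319897333507543509815336818572211270286240551805124608]"

lemma replicate_numeral: "replicate (numeral k) x = x # replicate (pred_numeral k) x"
  by (simp add: numeral_eq_Suc)

lemma a21_taylor_majorant_le_coeffs:
  "list_all2 (\<le>) (a21_taylor_majorant 44) (replicate 15 0 @ a21_majorant_coeffs)"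
  by (simp add: a21_taylor_majorant_def trig_majorant_def a21_majorant_coeffs_def
      cos_taylor_def sin_taylor_def cos_coeff_def sin_coeff_def fact_numeral replicate_numeral
      upt_rec del: upt_Suc)

lemma a21_majorant_coeffs_neg:
  assumes "0 \<le> x" "x \<le> 6"
  shows "poly a21_majorant_coeffs x < 0"
proof (rule neg_on_partition_imp_poly_neg)
  \<comment> \<open>breakpoints found by a greedy numerical search\<close>
  show "neg_on_partition a21_majorant_coeffs [0, 35/8, 5, 85/16, 89/16, 23/4, 47/8, 6]"
    by (simp add: a21_majorant_coeffs_def pos_coeffs_def neg_coeffs_def)
qed (use assms in auto)

lemma a21_rescaled_neg:
  assumes "0 < x"
  shows "a21_rescaled x < 0"
proof (cases "x \<le> 6")
  case True
  have "a21_rescaled x \<le> poly (a21_taylor_majorant 44) x"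
    using assms by (intro a21_rescaled_le_majorant) simp
  also have "\<dots> \<le> poly (replicate 15 0 @ a21_majorant_coeffs) x"
    by (rule poly_le_poly_coeffwise[OF a21_taylor_majorant_le_coeffs]) (use assms in simp)
  also have "\<dots> = x ^ 15 * poly a21_majorant_coeffs x"
    by (rule poly_replicate_zero_append)
  also have "\<dots> < 0"
    using assms True a21_majorant_coeffs_neg[of x] by (simp add: mult_pos_neg)
  finally show ?thesis .
next
  case False
  then show ?thesis by (intro a21_rescaled_neg_large) simp
qed

theorem lemma5p4:
  fixes u :: real
  assumes "u > 0"
  shows "45*u + 608*u^3 - 512*u^5 + 16*u*(28*u^2 - 3)*cos (4*u) + 3*u*cos (8*u)
         + 12*sin (4*u) - 432*u^2*sin (4*u) + 256*u^4*sin (4*u) - 6*sin (8*u) < 0"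
proof -
  have "45*u + 608*u^3 - 512*u^5 + 16*u*(28*u^2 - 3)*cos (4*u) + 3*u*cos (8*u)
         + 12*sin (4*u) - 432*u^2*sin (4*u) + 256*u^4*sin (4*u) - 6*sin (8*u)
      = a21_rescaled (4*u) / 4"
    by (simp add: a21_rescaled_def power_mult_distrib power2_eq_square power3_eq_cube algebra_simps)
  then show ?thesis
    using a21_rescaled_neg[of "4*u"] assms by simp
qed

end
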